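(* For every integer $n\ge 3$, $$\gamma_t(C_n\times C_4)=\gamma_p(C_n\times C_4)=\begin{cases} n, & \text{if } n\equiv 0 \pmod 4,\\ n+1, & \text{if } n\equiv 1,3 \pmod 4,\\ n+2, & \text{if } n\equiv 2\pmod 4.\end{cases}$$
   Context: All graphs are finite, simple and undirected. $C_n$ denotes the cycle of order $n$ and $G\times H$ the Cartesian product of graphs. For a graph $G$ without isolated vertices: a set $D\subseteq V(G)$ is a total dominating set if every vertex of $G$ (including those in $D$) has a neighbour in $D$; $\gamma_t(G)$ is the minimum size of a total dominating set. A set $D\subseteq V(G)$ is a paired dominating set if every vertex outside $D$ has a neighbour in $D$ and the induced subgraph $G[D]$ has a perfect matching; $\gamma_p(G)$ is the minimum size of a paired dominating set. *)

theory Defs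
  imports Main
begin

text \<open>A finite simple graph is given by a vertex set V and an adjacency
  relation E (assumed symmetric and irreflexive on V).\<close>

definition cycle_adj :: "nat \<Rightarrow> nat \<Rightarrow> nat \<Rightarrow> bool" where
  "cycle_adj n i j \<longleftrightarrow> i < n \<and> j < n \<and> (j = (i + 1) mod n \<or> i = (j + 1) mod n)"

definition cycle_V :: "nat \<Rightarrow> nat set" where
  "cycle_V n = {0..<n}"

definition cart_V :: "'a set \<Rightarrow> 'b set \<Rightarrow> ('a \<times> 'b) set" where
  "cart_V V1 V2 = V1 \<times> V2"

definition cart_adj :: "('a \<Rightarrow> 'a \<Rightarrow> bool) \<Rightarrow> ('b \<Rightarrow> 'b \<Rightarrow> bool)
    \<Rightarrow> ('a \<times> 'b) \<Rightarrow> ('a \<times> 'b) \<Rightarrow> bool" where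
  "cart_adj E1 E2 p q \<longleftrightarrow>
     (fst p = fst q \<and> E2 (snd p) (snd q)) \<or> (snd p = snd q \<and> E1 (fst p) (fst q))"

definition total_dominating :: "'a set \<Rightarrow> ('a \<Rightarrow> 'a \<Rightarrow> bool) \<Rightarrow> 'a set \<Rightarrow> bool" where
  "total_dominating V E D \<longleftrightarrow> D \<subseteq> V \<and> (\<forall>v\<in>V. \<exists>u\<in>D. E v u)"

definition gamma_t :: "'a set \<Rightarrow> ('a \<Rightarrow> 'a \<Rightarrow> bool) \<Rightarrow> nat" where
  "gamma_t V E = Min {card D | D. total_dominating V E D}"

definition perfect_matching_on :: "('a \<Rightarrow> 'a \<Rightarrow> bool) \<Rightarrow> 'a set \<Rightarrow> 'a set set \<Rightarrow> bool" where
  "perfect_matching_on E D M \<longleftrightarrow>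
     (\<forall>e\<in>M. \<exists>u v. e = {u, v} \<and> u \<in> D \<and> v \<in> D \<and> u \<noteq> v \<and> E u v) \<and>
     (\<forall>v\<in>D. \<exists>!e. e \<in> M \<and> v \<in> e)"

definition paired_dominating :: "'a set \<Rightarrow> ('a \<Rightarrow> 'a \<Rightarrow> bool) \<Rightarrow> 'a set \<Rightarrow> bool" where
  "paired_dominating V E D \<longleftrightarrow> D \<subseteq> V \<and> (\<forall>v\<in>V - D. \<exists>u\<in>D. E v u) \<and>
     (\<exists>M. perfect_matching_on E D M)"

definition gamma_p :: "'a set \<Rightarrow> ('a \<Rightarrow> 'a \<Rightarrow> bool) \<Rightarrow> nat" where
  "gamma_p V E = Min {card D | D. paired_dominating V E D}"

end

theory Submission
  imports Defs
begin

text \<open>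
  \<open>C\<^sub>n \<times> C\<^sub>4\<close> is 4-regular on \<open>4n\<close> vertices, so a total dominating set \<open>D\<close> has
  \<open>|D| \<ge> n\<close>, and when \<open>4|D|\<close> is at most the number of vertices that \<open>D\<close> has to dominate,
  each of them has exactly one neighbour in \<open>D\<close>. Such an efficient set is invariant under the
  glide \<open>(i, j) \<mapsto> (i + 2, j + 2)\<close> and never contains both \<open>(i, j)\<close> and \<open>(i, j + 2)\<close>;
  gliding \<open>m\<close> times with \<open>2m \<equiv> 0 (mod n)\<close> and \<open>2m \<equiv> 2 (mod 4)\<close>, possible unless \<open>4 dvd n\<close>,
  produces such a pair. This gives \<open>|D| \<ge> n + 1\<close> for odd \<open>n\<close>. For \<open>n \<equiv> 2 (mod 4)\<close> the graph
  is bipartite, and the argument applies to the smaller colour class of \<open>D\<close>, which alone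
  dominates the \<open>2n\<close> vertices of the other colour, giving \<open>|D| \<ge> n + 2\<close>.

  Conversely, rows \<open>{0, 1}\<close> of the columns \<open>\<equiv> 0\<close> and rows \<open>{2, 3}\<close> of the columns
  \<open>\<equiv> 2 (mod 4)\<close>, together with rows \<open>{0, 1}\<close> of the last column when \<open>n \<equiv> 2 (mod 4)\<close>, form a
  total dominating set of that size whose vertical pairs are a perfect matching. Since paired
  domination implies total domination, both parameters equal this size.
\<close>

section \<open>Total and paired domination\<close>

lemma paired_dominating_imp_total_dominating:
  assumes "symp E" and "paired_dominating V E D"
  shows "total_dominating V E D"
  unfolding total_dominating_def
proof (intro conjI ballI)
  show "D \<subseteq> V"
    using assms(2) by (simp add: paired_dominating_def)
next
  fix v assume "v \<in> V"
  show "\<exists>u\<in>D. E v u"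
  proof (cases "v \<in> D")
    case False
    then show ?thesis
      using assms(2) \<open>v \<in> V\<close> by (auto simp: paired_dominating_def)
  next
    case True
    obtain M where "perfect_matching_on E D M"
      using assms(2) by (auto simp: paired_dominating_def)
    then obtain u w where "u \<in> D" "w \<in> D" "E u w" "v = u \<or> v = w"
      using True unfolding perfect_matching_on_def by (metis insert_iff singletonD)
    then show ?thesis
      using \<open>symp E\<close> by (auto dest: sympD)
  qed
qed

lemma gamma_t_gamma_p_eqI:
  assumes "finite V" and "symp E"
    and lower: "\<And>D. total_dominating V E D \<Longrightarrow> b \<le> card D"
    and "paired_dominating V E D" and "card D = b"
  shows "gamma_t V E = b \<and> gamma_p V E = b"
proof -
  have "total_dominating V E D"
    using assms(2,4) by (rule paired_dominating_imp_total_dominating)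
  have finite_cards: "finite {card D | D. P D}" if "\<And>D. P D \<Longrightarrow> D \<subseteq> V" for P
    by (rule finite_subset[of _ "card ` Pow V"]) (use that \<open>finite V\<close> in auto)
  have "gamma_t V E = b"
    unfolding gamma_t_def
    by (rule Min_eqI) (use finite_cards[of "total_dominating V E"] lower
        \<open>total_dominating V E D\<close> \<open>card D = b\<close> in \<open>auto simp: total_dominating_def\<close>)
  moreover have "gamma_p V E = b"
    unfolding gamma_p_def
    by (rule Min_eqI) (use finite_cards[of "paired_dominating V E"] lower assms(4,5)
        paired_dominating_imp_total_dominating[OF \<open>symp E\<close>] in \<open>auto simp: paired_dominating_def\<close>)
  ultimately show ?thesis ..
qed

lemma perfect_matching_on_involution:
  assumes "\<And>x. x \<in> D \<Longrightarrow> f x \<in> D" and "\<And>x. x \<in> D \<Longrightarrow> f x \<noteq> x"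
    and "\<And>x. x \<in> D \<Longrightarrow> f (f x) = x" and "\<And>x. x \<in> D \<Longrightarrow> E x (f x)"
  shows "perfect_matching_on E D {{x, f x} | x. x \<in> D}"
  unfolding perfect_matching_on_def
proof (intro conjI ballI)
  fix e assume "e \<in> {{x, f x} | x. x \<in> D}"
  then obtain x where "x \<in> D" and "e = {x, f x}"
    by blast
  then have "e = {x, f x} \<and> x \<in> D \<and> f x \<in> D \<and> x \<noteq> f x \<and> E x (f x)"
    using assms(1,2,4) by (simp add: eq_commute[of x])
  then show "\<exists>u v. e = {u, v} \<and> u \<in> D \<and> v \<in> D \<and> u \<noteq> v \<and> E u v"
    by blast
next
  fix v assume "v \<in> D"
  show "\<exists>!e. e \<in> {{x, f x} | x. x \<in> D} \<and> v \<in> e"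
  proof (rule ex1I[of _ "{v, f v}"])
    show "{v, f v} \<in> {{x, f x} | x. x \<in> D} \<and> v \<in> {v, f v}"
      using \<open>v \<in> D\<close> by blast
  next
    fix e assume "e \<in> {{x, f x} | x. x \<in> D} \<and> v \<in> e"
    then obtain x where "x \<in> D" and "e = {x, f x}" and "v = x \<or> v = f x"
      by blast
    then show "e = {v, f v}"
      using assms(3) by auto
  qed
qed

section \<open>Double counting\<close>

lemma sum_card_neighbours_le:
  assumes "finite T" and "finite X" and "\<forall>x\<in>X. card {t\<in>T. E t x} \<le> d"
  shows "(\<Sum>t\<in>T. card {x\<in>X. E t x}) \<le> d * card X"
proof -
  have "(\<Sum>t\<in>T. card {x\<in>X. E t x}) = (\<Sum>x\<in>X. card {t\<in>T. E t x})"
    using sum_multicount_gen[OF assms(1,2), of E "\<lambda>x. card {t\<in>T. E t x}"] by simp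
  also have "\<dots> \<le> (\<Sum>x\<in>X. d)"
    using assms(3) by (intro sum_mono) simp
  finally show ?thesis
    by (simp add: mult.commute)
qed

lemma one_le_card_neighbours:
  assumes "finite X" and "\<forall>t\<in>T. \<exists>x\<in>X. E t x"
  shows "\<forall>t\<in>T. 1 \<le> card {x\<in>X. E t x}"
  using assms by (auto simp: Suc_le_eq card_gt_0_iff)

lemma card_le_mult_if_degree_le:
  assumes "finite T" and "finite X" and dom: "\<forall>t\<in>T. \<exists>x\<in>X. E t x"
    and "\<forall>x\<in>X. card {t\<in>T. E t x} \<le> d"
  shows "card T \<le> d * card X"
proof -
  have "card T = (\<Sum>t\<in>T. 1)"
    by simp
  also have "\<dots> \<le> (\<Sum>t\<in>T. card {x\<in>X. E t x})"
    using one_le_card_neighbours[OF \<open>finite X\<close> dom] by (intro sum_mono) simp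
  also have "\<dots> \<le> d * card X"
    using assms(1,2,4) by (rule sum_card_neighbours_le)
  finally show ?thesis .
qed

lemma neighbour_unique_if_mult_degree_le_card:
  assumes "finite T" and "finite X" and dom: "\<forall>t\<in>T. \<exists>x\<in>X. E t x"
    and "\<forall>x\<in>X. card {t\<in>T. E t x} \<le> d" and "d * card X \<le> card T"
    and "t \<in> T" "x \<in> X" "y \<in> X" "E t x" "E t y"
  shows "x = y"
proof (rule ccontr)
  assume "x \<noteq> y"
  have "card T = (\<Sum>t\<in>T. 1)"
    by simp
  also have "\<dots> < (\<Sum>t\<in>T. card {x\<in>X. E t x})"
  proof (rule sum_strict_mono_ex1[OF \<open>finite T\<close>])
    show "\<forall>t\<in>T. 1 \<le> card {x\<in>X. E t x}"
      using one_le_card_neighbours[OF \<open>finite X\<close> dom] .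
    have "{x, y} \<subseteq> {z\<in>X. E t z}"
      using \<open>x \<in> X\<close> \<open>y \<in> X\<close> \<open>E t x\<close> \<open>E t y\<close> by simp
    then have "card {x, y} \<le> card {z\<in>X. E t z}"
      using \<open>finite X\<close> by (intro card_mono) simp_all
    then show "\<exists>t\<in>T. 1 < card {x\<in>X. E t x}"
      using \<open>x \<noteq> y\<close> by (intro bexI[OF _ \<open>t \<in> T\<close>]) simp
  qed
  also have "\<dots> \<le> d * card X"
    using assms(1,2,4) by (rule sum_card_neighbours_le)
  finally show False
    using \<open>d * card X \<le> card T\<close> by simp
qed

section \<open>Cycles and Cartesian products\<close>

lemma symp_cycle_adj: "symp (cycle_adj n)"
  by (auto simp: symp_def cycle_adj_def)

lemma symp_cart_adj: "symp E1 \<Longrightarrow> symp E2 \<Longrightarrow> symp (cart_adj E1 E2)"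
  by (auto simp: symp_def cart_adj_def)

lemma cart_adj_Pair [simp]:
  "cart_adj E1 E2 (a, b) (c, d) \<longleftrightarrow> a = c \<and> E2 b d \<or> b = d \<and> E1 a c"
  by (simp add: cart_adj_def)

lemma cart_adj_neighbours:
  "{q. cart_adj E1 E2 q (a, b)} = {a} \<times> {y. E2 y b} \<union> {x. E1 x a} \<times> {b}"
  by (auto simp: cart_adj_def)

lemma card_cart_adj_neighbours_le:
  "card {q. cart_adj E1 E2 q (a, b)} \<le> card {y. E2 y b} + card {x. E1 x a}"
  unfolding cart_adj_neighbours
  by (rule order_trans[OF card_Un_le]) (simp add: card_cartesian_product)

lemma cycle_adj_Suc_mod: "i < n \<Longrightarrow> cycle_adj n i ((i + 1) mod n)"
  by (simp add: cycle_adj_def)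

lemma add_1_mod_eq_iff:
  fixes a b n :: nat
  assumes "a < n" and "b < n"
  shows "(a + 1) mod n = b \<longleftrightarrow> a = (b + n - 1) mod n"
proof (cases "a + 1 = n")
  case True
  then show ?thesis
    using assms by (cases b) (auto simp: mod_if)
next
  case False
  then show ?thesis
    using assms by (auto simp: mod_if)
qed

lemma add_1_mod_inj:
  fixes a b n :: nat
  assumes "a < n" and "b < n" and "(a + 1) mod n = (b + 1) mod n"
  shows "a = b"
  using add_1_mod_eq_iff[OF assms(1), of "(b + 1) mod n"] add_1_mod_eq_iff[OF assms(2), of "(b + 1) mod n"]
    assms by simp

lemma cycle_adj_cases:
  assumes "cycle_adj n a b"
  shows "a = (b + 1) mod n \<or> a = (b + n - 1) mod n"
  using assms add_1_mod_eq_iff[of a n b] by (auto simp: cycle_adj_def)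

lemma finite_cycle_neighbours: "finite {a. cycle_adj n a b}"
  by (rule finite_subset[of _ "{..<n}"]) (auto simp: cycle_adj_def)

lemma card_cycle_neighbours_le: "card {a. cycle_adj n a b} \<le> 2"
proof -
  have "card {a. cycle_adj n a b} \<le> card {(b + 1) mod n, (b + n - 1) mod n}"
    by (rule card_mono) (auto dest: cycle_adj_cases)
  also have "\<dots> \<le> 2"
    by (rule order_trans[OF card_insert_le_m1]) auto
  finally show ?thesis .
qed

lemma cycle_adj_even_iff:
  assumes "even n" and "cycle_adj n a b"
  shows "even a \<longleftrightarrow> odd b"
  using assms by (auto simp: cycle_adj_def dvd_mod_iff)

lemma less_4_cases: "(j::nat) < 4 \<Longrightarrow> j = 0 \<or> j = 1 \<or> j = 2 \<or> j = 3"
  by arith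

lemma cycle4_adj_antipode_adj:
  assumes "j < 4" and "cycle_adj 4 ((j + 2) mod 4) k"
  shows "cycle_adj 4 j k"
proof -
  have "k < 4"
    using assms(2) by (simp add: cycle_adj_def)
  then show ?thesis
    using less_4_cases[OF \<open>j < 4\<close>] less_4_cases[OF \<open>k < 4\<close>] assms(2)
    by (elim disjE) (simp_all add: cycle_adj_def)
qed

lemma cycle4_exists_adj_in_block:
  assumes "j < 4" and "b < 2"
  shows "\<exists>k. k div 2 = b \<and> cycle_adj 4 j k"
proof -
  have "b = 0 \<or> b = 1"
    using assms(2) by arith
  have "cycle_adj 4 j k \<and> k div 2 = b" if "k = (if j div 2 = b then 4 * b + 1 - j else 3 - j)" for k
    using \<open>b = 0 \<or> b = 1\<close> less_4_cases[OF \<open>j < 4\<close>] that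
    by (elim disjE) (simp_all add: cycle_adj_def)
  from this[OF refl] show ?thesis
    by blast
qed

lemma not_cycle_adj_self: "2 \<le> n \<Longrightarrow> \<not> cycle_adj n j j"
  by (auto simp: cycle_adj_def mod_if split: if_splits)

section \<open>Lower bound for \<open>C\<^sub>n \<times> C\<^sub>4\<close>\<close>

abbreviation torus_V :: "nat \<Rightarrow> (nat \<times> nat) set" where
  "torus_V n \<equiv> cart_V (cycle_V n) (cycle_V 4)"

abbreviation torus_adj :: "nat \<Rightarrow> nat \<times> nat \<Rightarrow> nat \<times> nat \<Rightarrow> bool" where
  "torus_adj n \<equiv> cart_adj (cycle_adj n) (cycle_adj 4)"

lemma torus_V_eq: "torus_V n = {..<n} \<times> {..<4}"
  by (auto simp: cart_V_def cycle_V_def)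

lemma finite_torus_neighbours: "finite {q. torus_adj n q p}"
  by (cases p) (simp add: cart_adj_neighbours finite_cycle_neighbours)

lemma card_torus_neighbours_le: "card {q\<in>T. torus_adj n q p} \<le> 4"
proof -
  have "card {q\<in>T. torus_adj n q p} \<le> card {q. torus_adj n q p}"
    by (rule card_mono[OF finite_torus_neighbours]) blast
  also have "\<dots> \<le> 4"
    using card_cart_adj_neighbours_le[of "cycle_adj n" "cycle_adj 4" "fst p" "snd p"]
      card_cycle_neighbours_le[of 4 "snd p"] card_cycle_neighbours_le[of n "fst p"]
    by simp
  finally show ?thesis .
qed

lemma torus_adj_even_iff:
  assumes "even n" and "torus_adj n p q"
  shows "even (fst p + snd p) \<longleftrightarrow> odd (fst q + snd q)"
  using assms cycle_adj_even_iff[of 4] cycle_adj_even_iff[of n] by (auto simp: cart_adj_def)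

text \<open>\<open>closed\<close> lists the vertices of \<open>T\<close> through which the glide argument propagates
  membership in \<open>X\<close>.\<close>

locale torus_efficient_domination =
  fixes n :: nat and X T :: "(nat \<times> nat) set"
  assumes subset: "X \<subseteq> torus_V n"
    and dominated: "\<And>t. t \<in> T \<Longrightarrow> \<exists>x\<in>X. torus_adj n t x"
    and unique_neighbour:
      "\<And>t x y. t \<in> T \<Longrightarrow> x \<in> X \<Longrightarrow> y \<in> X \<Longrightarrow> torus_adj n t x \<Longrightarrow> torus_adj n t y \<Longrightarrow> x = y"
    and closed: "\<And>i j. (i, j) \<in> X \<Longrightarrow>
      (i, (j + 1) mod 4) \<in> T \<and> ((i + 1) mod n, j) \<in> T \<and> ((i + 1) mod n, (j + 2) mod 4) \<in> T"
begin

lemma mem_bounds: "(i, j) \<in> X \<Longrightarrow> i < n \<and> j < 4"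
  using subset by (auto simp: torus_V_eq)

lemma antipode_not_mem:
  assumes "(i, j) \<in> X"
  shows "(i, (j + 2) mod 4) \<notin> X"
proof
  assume "(i, (j + 2) mod 4) \<in> X"
  have "j < 4"
    using mem_bounds assms by blast
  have "cycle_adj 4 ((j + 1) mod 4) j" "cycle_adj 4 ((j + 1) mod 4) ((j + 2) mod 4)"
    using cycle_adj_Suc_mod[OF \<open>j < 4\<close>] cycle_adj_Suc_mod[of "(j + 1) mod 4" 4]
      symp_cycle_adj[THEN sympD] by (auto simp: mod_Suc_eq)
  then have "torus_adj n (i, (j + 1) mod 4) (i, j)" "torus_adj n (i, (j + 1) mod 4) (i, (j + 2) mod 4)"
    by simp_all
  moreover have "(i, (j + 1) mod 4) \<in> T"
    using closed assms by blast
  ultimately have "(i, j) = (i, (j + 2) mod 4)"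
    using unique_neighbour assms \<open>(i, (j + 2) mod 4) \<in> X\<close> by blast
  then show False
    using less_4_cases[OF \<open>j < 4\<close>] by auto
qed

lemma shift_mem:
  assumes "(i, j) \<in> X"
  shows "((i + 2) mod n, (j + 2) mod 4) \<in> X"
proof -
  have "i < n" "j < 4"
    using mem_bounds assms by auto
  obtain i' j' where "(i', j') \<in> X" and adj: "torus_adj n ((i + 1) mod n, (j + 2) mod 4) (i', j')"
    using dominated closed assms by fast
  then have "i' < n"
    using mem_bounds by blast
  from adj consider "i' = (i + 1) mod n" "cycle_adj 4 ((j + 2) mod 4) j'"
    | "j' = (j + 2) mod 4" "cycle_adj n ((i + 1) mod n) i'"
    by auto
  then show ?thesis
  proof cases
    case 1
    have "torus_adj n ((i + 1) mod n, j) (i, j)"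
      using cycle_adj_Suc_mod[OF \<open>i < n\<close>] symp_cycle_adj[THEN sympD] by simp
    moreover have "torus_adj n ((i + 1) mod n, j) (i', j')"
      using 1 cycle4_adj_antipode_adj[OF \<open>j < 4\<close>] by simp
    ultimately have "(i, j) = (i', j')"
      using unique_neighbour closed assms \<open>(i', j') \<in> X\<close> by blast
    then show ?thesis
      using 1 cycle4_adj_antipode_adj[OF \<open>j < 4\<close>] not_cycle_adj_self[of 4] by auto
  next
    case 2
    then have "i' = ((i + 1) mod n + 1) mod n \<or> (i + 1) mod n = (i' + 1) mod n"
      by (auto simp: cycle_adj_def)
    moreover have "i' \<noteq> i"
      using 2 antipode_not_mem assms \<open>(i', j') \<in> X\<close> by blast
    ultimately have "i' = (i + 2) mod n"
      using add_1_mod_inj[OF \<open>i < n\<close> \<open>i' < n\<close>] by (auto simp: mod_Suc_eq)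
    then show ?thesis
      using 2 \<open>(i', j') \<in> X\<close> by simp
  qed
qed

lemma shift_iterate_mem:
  assumes "(a, b) \<in> X"
  shows "((a + 2 * m) mod n, (b + 2 * m) mod 4) \<in> X"
proof (induction m)
  case 0
  then show ?case
    using assms mem_bounds by simp
next
  case (Suc m)
  have "((a + 2 * m) mod n + 2) mod n = (a + 2 * Suc m) mod n"
    "((b + 2 * m) mod 4 + 2) mod 4 = (b + 2 * Suc m) mod 4"
    using mod_add_left_eq[of "a + 2 * m" n 2] mod_add_left_eq[of "b + 2 * m" 4 2] by simp_all
  then show ?case
    using shift_mem[OF Suc] by simp
qed

lemma four_dvd:
  assumes "X \<noteq> {}"
  shows "4 dvd n"
proof (rule ccontr)
  assume "\<not> 4 dvd n"
  obtain a b where "(a, b) \<in> X"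
    using assms by auto
  define m where "m = (if odd n then n else n div 2)"
  have "n dvd 2 * m"
    unfolding m_def by (cases "odd n") auto
  moreover have "2 * m mod 4 = 2"
    using \<open>\<not> 4 dvd n\<close> unfolding m_def by presburger
  ultimately have "(a, (b + 2) mod 4) \<in> X"
    using shift_iterate_mem[OF \<open>(a, b) \<in> X\<close>, of m] mem_bounds[OF \<open>(a, b) \<in> X\<close>]
    by (simp add: mod_add_right_eq[of _ "2 * m", symmetric])
  then show False
    using antipode_not_mem \<open>(a, b) \<in> X\<close> by blast
qed

end

lemma torus_tight_domination_imp_4_dvd:
  assumes "finite T" and "X \<subseteq> torus_V n" and "T \<noteq> {}"
    and dom: "\<forall>t\<in>T. \<exists>x\<in>X. torus_adj n t x" and "4 * card X \<le> card T"
    and closed: "\<And>i j. (i, j) \<in> X \<Longrightarrow>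
      (i, (j + 1) mod 4) \<in> T \<and> ((i + 1) mod n, j) \<in> T \<and> ((i + 1) mod n, (j + 2) mod 4) \<in> T"
  shows "4 dvd n"
proof -
  have "finite X"
    using \<open>X \<subseteq> torus_V n\<close> by (rule finite_subset) (simp add: torus_V_eq)
  have "X \<noteq> {}"
    using \<open>T \<noteq> {}\<close> dom by blast
  have "\<forall>x\<in>X. card {t\<in>T. torus_adj n t x} \<le> 4"
    using card_torus_neighbours_le by blast
  note unique = neighbour_unique_if_mult_degree_le_card[OF \<open>finite T\<close> \<open>finite X\<close> dom this \<open>4 * card X \<le> card T\<close>]
  interpret torus_efficient_domination n X T
  proof
    show "\<exists>x\<in>X. torus_adj n t x" if "t \<in> T" for t
      using dom that by blast
    show "x = y" if "t \<in> T" "x \<in> X" "y \<in> X" "torus_adj n t x" "torus_adj n t y" for t x y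
      using unique[OF that] .
  qed (use \<open>X \<subseteq> torus_V n\<close> closed in simp_all)
  show ?thesis
    using four_dvd \<open>X \<noteq> {}\<close> .
qed

definition torus_colour_class :: "nat \<Rightarrow> bool \<Rightarrow> (nat \<times> nat) set" where
  "torus_colour_class n c = {p \<in> torus_V n. even (fst p + snd p) = c}"

lemma card_torus_colour_class: "card (torus_colour_class n c) = 2 * n"
proof -
  have column: "card {j :: nat. j < 4 \<and> even (i + j) = c} = 2" for i
  proof -
    have "{j :: nat. j < 4 \<and> even (i + j) = c} = (if even i = c then {0, 2 :: nat} else {1, 3})"
      by (auto dest: less_4_cases)
    then show ?thesis
      by simp
  qed
  have "torus_colour_class n c = (SIGMA i:{..<n}. {j. j < 4 \<and> even (i + j) = c})"
    by (auto simp: torus_colour_class_def torus_V_eq)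
  also have "card \<dots> = (\<Sum>i<n. card {j :: nat. j < 4 \<and> even (i + j) = c})"
    by (rule card_SigmaI) auto
  also have "\<dots> = 2 * n"
    by (simp only: column) simp
  finally show ?thesis .
qed

lemma torus_colour_class_adj:
  assumes "even n" and "torus_adj n p q" and "p \<in> torus_colour_class n (\<not> c)" and "q \<in> torus_V n"
  shows "q \<in> torus_colour_class n c"
  using torus_adj_even_iff[OF assms(1,2)] assms(3,4) by (auto simp: torus_colour_class_def)

lemma torus_colour_class_closed:
  assumes "even n" and "(i, j) \<in> torus_colour_class n c"
  shows "(i, (j + 1) mod 4) \<in> torus_colour_class n (\<not> c) \<and> ((i + 1) mod n, j) \<in> torus_colour_class n (\<not> c)
    \<and> ((i + 1) mod n, (j + 2) mod 4) \<in> torus_colour_class n (\<not> c)"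
  using assms by (auto simp: torus_colour_class_def torus_V_eq dvd_mod_iff)

lemma torus_colour_class_dominated:
  assumes "even n" and "total_dominating (torus_V n) (torus_adj n) D"
    and "t \<in> torus_colour_class n (\<not> c)"
  shows "\<exists>x\<in>D \<inter> torus_colour_class n c. torus_adj n t x"
proof -
  have "t \<in> torus_V n"
    using assms(3) by (simp add: torus_colour_class_def)
  then obtain u where "u \<in> D" and "torus_adj n t u" and "u \<in> torus_V n"
    using assms(2) unfolding total_dominating_def by blast
  then have "u \<in> torus_colour_class n c"
    using torus_colour_class_adj[OF \<open>even n\<close> \<open>torus_adj n t u\<close> assms(3)] by blast
  then show ?thesis
    using \<open>u \<in> D\<close> \<open>torus_adj n t u\<close> by blast
qed

lemma torus_total_dominating_card_ge_2_mod_4: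
  assumes "n mod 4 = 2" and td: "total_dominating (torus_V n) (torus_adj n) D"
  shows "n + 2 \<le> card D"
proof (rule ccontr)
  assume "\<not> n + 2 \<le> card D"
  have "even n" and "0 < n"
    using assms(1) by presburger+
  have "D \<subseteq> torus_V n"
    using td by (simp add: total_dominating_def)
  have "finite D"
    using \<open>D \<subseteq> torus_V n\<close> by (rule finite_subset) (simp add: torus_V_eq)
  define X where "X c = D \<inter> torus_colour_class n c" for c
  have "D = X True \<union> X False" and "X True \<inter> X False = {}"
    using \<open>D \<subseteq> torus_V n\<close> by (auto simp: X_def torus_colour_class_def)
  then have "card D = card (X True) + card (X False)"
    using \<open>finite D\<close> by (simp add: card_Un_disjoint)
  then have "2 * card (X True) \<le> n \<or> 2 * card (X False) \<le> n"
    using \<open>\<not> n + 2 \<le> card D\<close> \<open>even n\<close> by presburger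
  then obtain c where "2 * card (X c) \<le> n"
    by blast
  have "4 dvd n"
  proof (rule torus_tight_domination_imp_4_dvd)
    show "finite (torus_colour_class n (\<not> c))" and "X c \<subseteq> torus_V n"
      using \<open>D \<subseteq> torus_V n\<close> by (auto simp: X_def torus_colour_class_def torus_V_eq)
    show "torus_colour_class n (\<not> c) \<noteq> {}" and "4 * card (X c) \<le> card (torus_colour_class n (\<not> c))"
      using card_torus_colour_class[of n "\<not> c"] \<open>0 < n\<close> \<open>2 * card (X c) \<le> n\<close> by auto
    show "\<forall>t\<in>torus_colour_class n (\<not> c). \<exists>x\<in>X c. torus_adj n t x"
      using torus_colour_class_dominated[OF \<open>even n\<close> td] by (simp add: X_def)
    show "(i, (j + 1) mod 4) \<in> torus_colour_class n (\<not> c) \<and> ((i + 1) mod n, j) \<in> torus_colour_class n (\<not> c)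
      \<and> ((i + 1) mod n, (j + 2) mod 4) \<in> torus_colour_class n (\<not> c)" if "(i, j) \<in> X c" for i j
      using torus_colour_class_closed[OF \<open>even n\<close>] that by (simp add: X_def)
  qed
  then show False
    using assms(1) by presburger
qed

lemma torus_total_dominating_card_ge:
  assumes "0 < n" and td: "total_dominating (torus_V n) (torus_adj n) D"
  shows "(if n mod 4 = 0 then n else if n mod 4 = 2 then n + 2 else n + 1) \<le> card D"
proof -
  have "D \<subseteq> torus_V n" and dom: "\<forall>v\<in>torus_V n. \<exists>u\<in>D. torus_adj n v u"
    using td by (auto simp: total_dominating_def)
  have "finite D"
    using \<open>D \<subseteq> torus_V n\<close> by (rule finite_subset) (simp add: torus_V_eq)
  have "finite (torus_V n)" and "card (torus_V n) = 4 * n"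
    by (simp_all add: torus_V_eq card_cartesian_product)
  have degree: "\<forall>x\<in>D. card {t\<in>torus_V n. torus_adj n t x} \<le> 4"
    using card_torus_neighbours_le by blast
  have "4 * n \<le> 4 * card D"
    using card_le_mult_if_degree_le[OF \<open>finite (torus_V n)\<close> \<open>finite D\<close> dom degree]
      \<open>card (torus_V n) = 4 * n\<close> by simp
  moreover have "n < card D" if "odd n"
  proof (rule ccontr)
    assume "\<not> n < card D"
    have "4 dvd n"
    proof (rule torus_tight_domination_imp_4_dvd[OF \<open>finite (torus_V n)\<close> \<open>D \<subseteq> torus_V n\<close> _ dom])
      show "torus_V n \<noteq> {}" and "4 * card D \<le> card (torus_V n)"
        using \<open>0 < n\<close> \<open>\<not> n < card D\<close> \<open>card (torus_V n) = 4 * n\<close> by (auto simp: torus_V_eq lessThan_empty_iff)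
      show "(i, (j + 1) mod 4) \<in> torus_V n \<and> ((i + 1) mod n, j) \<in> torus_V n
          \<and> ((i + 1) mod n, (j + 2) mod 4) \<in> torus_V n" if "(i, j) \<in> D" for i j
        using that \<open>D \<subseteq> torus_V n\<close> by (auto simp: torus_V_eq)
    qed
    then show False
      using \<open>odd n\<close> by presburger
  qed
  moreover have "n + 2 \<le> card D" if "n mod 4 = 2"
    using that td by (rule torus_total_dominating_card_ge_2_mod_4)
  moreover have "odd n" if "n mod 4 \<noteq> 0" and "n mod 4 \<noteq> 2"
    using that by presburger
  ultimately show ?thesis
    by auto
qed

section \<open>A paired dominating set of \<open>C\<^sub>n \<times> C\<^sub>4\<close>\<close>

definition torus_dom_cols :: "nat \<Rightarrow> nat set" where
  "torus_dom_cols n = {i. i < n \<and> (even i \<or> n mod 4 = 2 \<and> i = n - 1)}"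

text \<open>Column \<open>i\<close> carries the rows \<open>j\<close> with \<open>j div 2 = i div 2 mod 2\<close>: rows \<open>{0, 1}\<close> for
  \<open>i \<equiv> 0, 1 (mod 4)\<close> and rows \<open>{2, 3}\<close> for \<open>i \<equiv> 2 (mod 4)\<close>.\<close>

definition torus_dom_set :: "nat \<Rightarrow> (nat \<times> nat) set" where
  "torus_dom_set n = (SIGMA i:torus_dom_cols n. {j. j < 4 \<and> j div 2 = i div 2 mod 2})"

lemma card_even_below: "card {i::nat. i < n \<and> even i} = (n + 1) div 2"
proof -
  have "{i::nat. i < n \<and> even i} = (\<lambda>k. 2 * k) ` {..<(n + 1) div 2}"
    by (auto elim!: evenE)
  then show ?thesis
    by (simp add: card_image inj_on_def)
qed

lemma card_torus_dom_cols:
  "card (torus_dom_cols n) = (if n mod 4 = 2 then (n + 1) div 2 + 1 else (n + 1) div 2)"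
proof (cases "n mod 4 = 2")
  case True
  then have "torus_dom_cols n = insert (n - 1) {i. i < n \<and> even i}" and "odd (n - 1)"
    by (auto simp: torus_dom_cols_def) presburger+
  then show ?thesis
    using True by (simp add: card_even_below)
next
  case False
  then have "torus_dom_cols n = {i. i < n \<and> even i}"
    by (auto simp: torus_dom_cols_def)
  then show ?thesis
    using False by (simp add: card_even_below)
qed

lemma card_torus_dom_set:
  "card (torus_dom_set n) = (if n mod 4 = 0 then n else if n mod 4 = 2 then n + 2 else n + 1)"
proof -
  have block: "{j::nat. j < 4 \<and> j div 2 = b} = {2 * b, 2 * b + 1}" if "b < 2" for b
    using that by auto
  have "card (torus_dom_set n) = (\<Sum>i\<in>torus_dom_cols n. card {j::nat. j < 4 \<and> j div 2 = i div 2 mod 2})"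
    unfolding torus_dom_set_def by (rule card_SigmaI) (auto simp: torus_dom_cols_def)
  also have "\<dots> = 2 * card (torus_dom_cols n)"
    by (simp add: block)
  finally show ?thesis
    by (simp add: card_torus_dom_cols) presburger
qed

lemma torus_dom_cols_neighbours:
  assumes "i < n" and "i \<notin> torus_dom_cols n"
  shows "0 < i" and "i - 1 \<in> torus_dom_cols n" and "(i + 1) mod n \<in> torus_dom_cols n"
    and "(i - 1) div 2 mod 2 \<noteq> (i + 1) mod n div 2 mod 2"
proof -
  have "odd i" and not_last: "\<not> (n mod 4 = 2 \<and> i = n - 1)"
    using assms by (auto simp: torus_dom_cols_def)
  then show "0 < i" and "i - 1 \<in> torus_dom_cols n"
    using assms(1) odd_pos by (auto simp: torus_dom_cols_def)
  show "(i + 1) mod n \<in> torus_dom_cols n" and "(i - 1) div 2 mod 2 \<noteq> (i + 1) mod n div 2 mod 2"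
  proof (atomize (full), cases "i + 1 = n")
    case True
    then have "n mod 4 = 0"
      using \<open>odd i\<close> not_last by presburger
    then show "(i + 1) mod n \<in> torus_dom_cols n \<and> (i - 1) div 2 mod 2 \<noteq> (i + 1) mod n div 2 mod 2"
      using True by (simp add: torus_dom_cols_def) presburger
  next
    case False
    then show "(i + 1) mod n \<in> torus_dom_cols n \<and> (i - 1) div 2 mod 2 \<noteq> (i + 1) mod n div 2 mod 2"
      using assms(1) \<open>odd i\<close> by (simp add: torus_dom_cols_def) presburger
  qed
qed

lemma torus_dom_set_adj_in_column:
  assumes "i \<in> torus_dom_cols n" and "j < 4"
  shows "\<exists>u\<in>torus_dom_set n. torus_adj n (i, j) u"
proof -
  obtain k where "k div 2 = i div 2 mod 2" and "cycle_adj 4 j k"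
    using cycle4_exists_adj_in_block[OF \<open>j < 4\<close>, of "i div 2 mod 2"] by auto
  then have "(i, k) \<in> torus_dom_set n"
    using assms(1) by (simp add: torus_dom_set_def cycle_adj_def)
  then show ?thesis
    using \<open>cycle_adj 4 j k\<close> by force
qed

lemma torus_dom_set_adj_off_column:
  assumes "i < n" and "i \<notin> torus_dom_cols n" and "j < 4"
  shows "\<exists>u\<in>torus_dom_set n. torus_adj n (i, j) u"
proof -
  note neighbours = torus_dom_cols_neighbours[OF assms(1,2)]
  show ?thesis
  proof (cases "j div 2 = (i - 1) div 2 mod 2")
    case True
    have "cycle_adj n i (i - 1)"
      using \<open>i < n\<close> neighbours(1) by (simp add: cycle_adj_def)
    moreover have "(i - 1, j) \<in> torus_dom_set n"
      using True \<open>j < 4\<close> neighbours(2) by (simp add: torus_dom_set_def)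
    ultimately show ?thesis
      by force
  next
    case False
    moreover have "j div 2 < 2" and "(i - 1) div 2 mod 2 < 2" and "(i + 1) mod n div 2 mod 2 < 2"
      using \<open>j < 4\<close> by simp_all
    ultimately have "j div 2 = (i + 1) mod n div 2 mod 2"
      using neighbours(4) by arith
    then have "((i + 1) mod n, j) \<in> torus_dom_set n"
      using \<open>j < 4\<close> neighbours(3) by (simp add: torus_dom_set_def)
    then show ?thesis
      using cycle_adj_Suc_mod[OF \<open>i < n\<close>] by force
  qed
qed

lemma torus_dom_set_total_dominating: "total_dominating (torus_V n) (torus_adj n) (torus_dom_set n)"
  unfolding total_dominating_def
proof (intro conjI ballI)
  show "torus_dom_set n \<subseteq> torus_V n"
    by (auto simp: torus_dom_set_def torus_dom_cols_def torus_V_eq)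
next
  fix v assume "v \<in> torus_V n"
  then obtain i j where "v = (i, j)" and "i < n" and "j < 4"
    by (auto simp: torus_V_eq)
  then show "\<exists>u\<in>torus_dom_set n. torus_adj n v u"
    using torus_dom_set_adj_in_column torus_dom_set_adj_off_column by (cases "i \<in> torus_dom_cols n") auto
qed

lemma torus_dom_set_perfect_matching:
  defines "f \<equiv> \<lambda>(i, j). (i, if even j then j + 1 else j - 1 :: nat)"
  shows "perfect_matching_on (torus_adj n) (torus_dom_set n) {{x, f x} | x. x \<in> torus_dom_set n}"
proof (rule perfect_matching_on_involution)
  fix x assume "x \<in> torus_dom_set n"
  then obtain i j where x: "x = (i, j)" and "j < 4" and "i < n"
    by (auto simp: torus_dom_set_def torus_dom_cols_def)
  have partner: "j div 2 = (if even j then j + 1 else j - 1) div 2"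
    "cycle_adj 4 j (if even j then j + 1 else j - 1)"
    using less_4_cases[OF \<open>j < 4\<close>] by (auto simp: cycle_adj_def)
  show "f x \<in> torus_dom_set n" and "torus_adj n x (f x)"
    using \<open>x \<in> torus_dom_set n\<close> partner by (auto simp: x f_def torus_dom_set_def cycle_adj_def)
  show "f x \<noteq> x" and "f (f x) = x"
    using less_4_cases[OF \<open>j < 4\<close>] by (auto simp: x f_def)
qed

lemma torus_dom_set_paired_dominating: "paired_dominating (torus_V n) (torus_adj n) (torus_dom_set n)"
  using torus_dom_set_total_dominating[of n] torus_dom_set_perfect_matching[of n]
  unfolding paired_dominating_def total_dominating_def by blast

theorem theorem4p1:
  fixes n :: nat
  assumes "n \<ge> 3"
  shows "gamma_t (cart_V (cycle_V n) (cycle_V 4)) (cart_adj (cycle_adj n) (cycle_adj 4))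
           = gamma_p (cart_V (cycle_V n) (cycle_V 4)) (cart_adj (cycle_adj n) (cycle_adj 4))
       \<and> gamma_t (cart_V (cycle_V n) (cycle_V 4)) (cart_adj (cycle_adj n) (cycle_adj 4))
           = (if n mod 4 = 0 then n else if n mod 4 = 2 then n + 2 else n + 1)"
proof -
  have "0 < n"
    using assms by simp
  have "gamma_t (torus_V n) (torus_adj n) = card (torus_dom_set n)
      \<and> gamma_p (torus_V n) (torus_adj n) = card (torus_dom_set n)"
  proof (rule gamma_t_gamma_p_eqI)
    show "finite (torus_V n)"
      by (simp add: torus_V_eq)
    show "symp (torus_adj n)"
      by (intro symp_cart_adj symp_cycle_adj)
    show "card (torus_dom_set n) \<le> card D" if "total_dominating (torus_V n) (torus_adj n) D" for D
      using torus_total_dominating_card_ge[OF \<open>0 < n\<close> that] by (simp add: card_torus_dom_set)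
  qed (rule torus_dom_set_paired_dominating, rule refl)
  then show ?thesis
    by (simp add: card_torus_dom_set)
qed

end
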